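(* Fix a plane tree $T$ with $n\ge 1$ edges and let $F(T)$ be the forest obtained by deleting its root (the ordered list of subtrees rooted at the children of the root). The map sending a labeling $\ell$ such that $(T,\ell)$ is a sticky tree to the function $v\mapsto c(v)-1$ on the nodes of $F(T)$, where $c$ is the certificate-counting function of $(T,\ell)$, is a bijection from the set of such labelings onto the set of closed flows on $F(T)$.
   Context: Sticky trees: a plane tree is a rooted tree in which the children of every node are linearly ordered (left to right). The root has depth $0$, a child of a node of depth $d$ has depth $d+1$. The prefix order is: the root, followed by the prefix order of the subtree of its leftmost child, then of its second child, and so on. $S_u$ denotes the subtree rooted at $u$. A sticky tree is a plane tree $S$ with node set $V$ and a labeling $\ell:V\to\mathbb{N}$ such that: (1) every node $u$ of depth $d$ has $0\le\ell(u)\le d$; (2) every node $u$ of depth $d>0$ has some $v\in S_u$ (possibly $v=u$) with $\ell(v)<d$; (3) for every node $u$ of depth $d$, if some $v\in S_u$ has $\ell(v)=d$, then every node of $S_u$ (including $u$) preceding $v$ in prefix order has label at least $d$. The certificate of a non-root node $u$ of depth $d$ is the first node, in prefix order, of $S_u$ whose label is $<d$. The certificate-counting function $c:V\to\mathbb{N}$ assigns to each node $w$ the number of non-root nodes whose certificate is $w$. Flows: a forest is an ordered list $(A_1,\dots,A_k)$ of plane trees. A flow on a forest $F$ is an integer-valued function $f$ on its nodes with $f(v)\ge -1$ for every node $v$ and such that the outgoing rate of every node is nonnegative, where the outgoing rate of $v$ is $\sum_{w} f(w)$ over all nodes $w$ of the subtree of $F$ rooted at $v$ (including $v$). A flow is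 closed if the outgoing rate of the root of every $A_i$ is $0$. *)

theory Defs
  imports Main "HOL-Library.FuncSet"
begin

datatype ptree = Node "ptree list"

text \<open>Nodes of a plane tree are addressed by paths (lists of child indices)
  from the root; the root is the empty path and the depth of a node is the
  length of its path.\<close>
fun is_node :: "ptree \<Rightarrow> nat list \<Rightarrow> bool" where
  "is_node t [] = True"
| "is_node (Node ts) (i # p) = (i < length ts \<and> is_node (ts ! i) p)"

definition nodes :: "ptree \<Rightarrow> nat list set" where
  "nodes t = {p. is_node t p}"

definition num_edges :: "ptree \<Rightarrow> nat" where
  "num_edges t = card (nodes t) - 1"

definition depth :: "nat list \<Rightarrow> nat" where
  "depth u = length u"

definition subtree :: "ptree \<Rightarrow> nat list \<Rightarrow> nat list set" where
  "subtree t u = {v \<in> nodes t. \<exists>w. v = u @ w}"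

text \<open>Prefix order: strict lexicographic order on paths in which a proper
  prefix (ancestor) comes first.\<close>
definition precedes :: "nat list \<Rightarrow> nat list \<Rightarrow> bool" where
  "precedes u v \<longleftrightarrow> (u, v) \<in> lexord {(a, b). a < b}"

definition sticky :: "ptree \<Rightarrow> (nat list \<Rightarrow> nat) \<Rightarrow> bool" where
  "sticky t l \<longleftrightarrow>
     (\<forall>u\<in>nodes t. l u \<le> depth u) \<and>
     (\<forall>u\<in>nodes t. depth u > 0 \<longrightarrow> (\<exists>v\<in>subtree t u. l v < depth u)) \<and>
     (\<forall>u\<in>nodes t. \<forall>v\<in>subtree t u. l v = depth u \<longrightarrow>
        (\<forall>w\<in>subtree t u. precedes w v \<longrightarrow> l w \<ge> depth u))"

definition certificate :: "ptree \<Rightarrow> (nat list \<Rightarrow> nat) \<Rightarrow> nat list \<Rightarrow> nat list" where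
  "certificate t l u = (THE v. v \<in> subtree t u \<and> l v < depth u \<and>
      (\<forall>w\<in>subtree t u. precedes w v \<longrightarrow> \<not> l w < depth u))"

definition cert_count :: "ptree \<Rightarrow> (nat list \<Rightarrow> nat) \<Rightarrow> nat list \<Rightarrow> nat" where
  "cert_count t l w = card {u \<in> nodes t. u \<noteq> [] \<and> certificate t l u = w}"

definition sticky_labelings :: "ptree \<Rightarrow> (nat list \<Rightarrow> nat) set" where
  "sticky_labelings t = {l. l \<in> extensional (nodes t) \<and> sticky t l}"

text \<open>The forest F(t) obtained by deleting the root: its nodes are the
  non-root nodes of t, the subtree of F(t) at a node v coincides with the
  subtree of t at v, and the roots of its trees are the children [i] of the
  root of t.\<close>
definition forest_nodes :: "ptree \<Rightarrow> nat list set" where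
  "forest_nodes t = nodes t - {[]}"

definition out_rate :: "ptree \<Rightarrow> (nat list \<Rightarrow> int) \<Rightarrow> nat list \<Rightarrow> int" where
  "out_rate t f v = (\<Sum>w\<in>subtree t v. f w)"

definition is_flow :: "ptree \<Rightarrow> (nat list \<Rightarrow> int) \<Rightarrow> bool" where
  "is_flow t f \<longleftrightarrow> (\<forall>v\<in>forest_nodes t. f v \<ge> -1 \<and> out_rate t f v \<ge> 0)"

definition closed_flows :: "ptree \<Rightarrow> (nat list \<Rightarrow> int) set" where
  "closed_flows t = {f. f \<in> extensional (forest_nodes t) \<and> is_flow t f \<and>
      (\<forall>i. [i] \<in> forest_nodes t \<longrightarrow> out_rate t f [i] = 0)}"

definition flow_of_labeling :: "ptree \<Rightarrow> (nat list \<Rightarrow> nat) \<Rightarrow> nat list \<Rightarrow> int" where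
  "flow_of_labeling t l = restrict (\<lambda>v. int (cert_count t l v) - 1) (forest_nodes t)"

end

theory Submission
  imports Defs "HOL-Library.List_Lexorder" "HOL-Library.Sublist"
begin

text \<open>A sticky labeling is recovered from its certificate counts by reading the nodes in prefix
  order. When the traversal reaches w, the labels of all earlier nodes are known, and so is the set
  D of open depths: the d \<ge> 1 for which the ancestor of w at depth d has not yet met a label
  below d. The nodes certified by w are exactly the open ancestors deeper than l(w), and l(w) is
  either 0 or itself open; hence c(w) determines l(w) as an order statistic of D. This gives
  injectivity, and run as a recursion on a closed flow f it constructs a preimage, provided
  f(w) + 1 \<le> |D| at every step. That bound is a count: the forest nodes up to w are the open
  ancestors of w together with the nodes certified by earlier nodes, while closedness and the
  nonnegative outgoing rates of the subtrees after w make the sum of f over the nodes up to w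
  nonpositive. The same rate condition on a subtree S_u forces a label below depth(u) inside S_u,
  which is stickiness condition (2).\<close>

lemma finite_less_induct [consumes 2, case_names less]:
  fixes N :: "'a::linorder set"
  assumes "finite N" "w \<in> N"
    and step: "\<And>w. w \<in> N \<Longrightarrow> (\<And>y. y \<in> N \<Longrightarrow> y < w \<Longrightarrow> P y) \<Longrightarrow> P w"
  shows "P w"
proof (rule ccontr)
  let ?B = "{x \<in> N. \<not> P x}"
  assume "\<not> P w"
  then have "Min ?B \<in> ?B" using assms(1,2) by (intro Min_in) auto
  moreover have "P (Min ?B)"
  proof (rule step)
    show "Min ?B \<in> N" using \<open>Min ?B \<in> ?B\<close> by blast
    fix y assume "y \<in> N" "y < Min ?B"
    then show "P y" using Min_le[of ?B y] assms(1) by fastforce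
  qed
  ultimately show False by blast
qed

lemma ex_threshold_card_greater:
  fixes D :: "nat set"
  assumes "finite D" "0 \<notin> D" "c \<le> card D"
  shows "\<exists>v. (v = 0 \<or> v \<in> D) \<and> card {d \<in> D. v < d} = c"
  using assms
proof (induction D arbitrary: c rule: finite_linorder_max_induct)
  case empty
  then show ?case by (intro exI[of _ 0]) simp
next
  case (insert b A)
  have "b \<notin> A" using insert.hyps(2) by blast
  show ?case
  proof (cases c)
    case 0
    have "{d \<in> insert b A. b < d} = {}" using insert.hyps(2) by auto
    then have "card {d \<in> insert b A. b < d} = c" using 0 by (simp only: card.empty)
    then show ?thesis by blast
  next
    case (Suc c')
    have "c' \<le> card A" using insert.prems(2) Suc \<open>b \<notin> A\<close> insert.hyps(1) by simp
    moreover have "0 \<notin> A" using insert.prems(1) by simp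
    ultimately obtain v where v: "v = 0 \<or> v \<in> A" "card {d \<in> A. v < d} = c'"
      using insert.IH by blast
    have "v < b" using v(1) insert.hyps(2) insert.prems(1) by auto
    then have "{d \<in> insert b A. v < d} = insert b {d \<in> A. v < d}" by auto
    then have "card {d \<in> insert b A. v < d} = c" using v(2) \<open>b \<notin> A\<close> insert.hyps(1) Suc by simp
    then show ?thesis using v(1) by blast
  qed
qed

lemma threshold_card_greater_unique:
  fixes D :: "nat set"
  assumes "finite D" "v = 0 \<or> v \<in> D" "v' = 0 \<or> v' \<in> D"
    "card {d \<in> D. v < d} = card {d \<in> D. v' < d}"
  shows "v = v'"
proof -
  have less: "card {d \<in> D. a < d} < card {d \<in> D. b < d}" if "b < a" "a \<in> D" for a b
    using that assms(1) by (intro psubset_card_mono) auto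
  show ?thesis
    using less[of v' v] less[of v v'] assms by (cases v v' rule: linorder_cases) auto
qed

subsection \<open>Prefix order\<close>

lemma precedes_iff_less: "precedes u v \<longleftrightarrow> u < v"
  by (simp add: precedes_def list_less_def)

lemma less_append_self:
  fixes u v :: "nat list"
  shows "v \<noteq> [] \<Longrightarrow> u < u @ v"
  by (cases v) (auto simp: list_less_def lexord_append_rightI)

lemma prefix_imp_le:
  fixes u v :: "nat list"
  assumes "prefix u v"
  shows "u \<le> v"
proof (cases "u = v")
  case False
  with assms obtain zs where "v = u @ zs" "zs \<noteq> []" by (auto elim: prefixE)
  then show ?thesis by (metis less_append_self less_imp_le)
qed simp

lemma append_less_if_not_prefix:
  fixes u v w :: "nat list"
  assumes "u < w" "\<not> prefix u w"
  shows "u @ v < w"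
  using assms by (auto simp: list_less_def lexord_def prefix_def; blast)

subsection \<open>Paths and subtrees\<close>

lemma is_node_append: "is_node t (p @ q) \<Longrightarrow> is_node t p"
  by (induction t p rule: is_node.induct) auto

lemma nodes_prefix_closed: "prefix u v \<Longrightarrow> v \<in> nodes t \<Longrightarrow> u \<in> nodes t"
  by (auto simp: nodes_def prefix_def intro: is_node_append)

lemma nodes_Node: "nodes (Node ts) = insert [] (\<Union>i<length ts. (#) i ` nodes (ts ! i))"
  by (rule set_eqI, case_tac x) (auto simp: nodes_def)

lemma finite_nodes: "finite (nodes t)"
  by (induction t) (simp add: nodes_Node)

lemma mem_subtree_iff: "v \<in> subtree t u \<longleftrightarrow> v \<in> nodes t \<and> prefix u v"
  by (auto simp: subtree_def prefix_def)

lemma subtree_subset_nodes: "subtree t u \<subseteq> nodes t"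
  by (auto simp: subtree_def)

lemma finite_subtree: "finite (subtree t u)"
  using finite_nodes subtree_subset_nodes by (rule finite_subset[rotated])

lemma mem_forest_nodes_iff: "v \<in> forest_nodes t \<longleftrightarrow> v \<in> nodes t \<and> v \<noteq> []"
  by (simp add: forest_nodes_def)

lemma subtree_subset_forest_nodes: "u \<in> forest_nodes t \<Longrightarrow> subtree t u \<subseteq> forest_nodes t"
  by (auto simp: mem_subtree_iff mem_forest_nodes_iff)

subsection \<open>Certificates\<close>

definition no_cert_before :: "ptree \<Rightarrow> (nat list \<Rightarrow> nat) \<Rightarrow> nat list \<Rightarrow> nat list \<Rightarrow> bool" where
  "no_cert_before t l u w \<longleftrightarrow> (\<forall>x\<in>subtree t u. x < w \<longrightarrow> length u \<le> l x)"

definition is_cert :: "ptree \<Rightarrow> (nat list \<Rightarrow> nat) \<Rightarrow> nat list \<Rightarrow> nat list \<Rightarrow> bool" where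
  "is_cert t l u x \<longleftrightarrow> x \<in> subtree t u \<and> l x < length u \<and> no_cert_before t l u x"

lemma is_cert_unique: "is_cert t l u x \<Longrightarrow> is_cert t l u y \<Longrightarrow> x = y"
  unfolding is_cert_def no_cert_before_def by (metis leD linorder_neqE)

lemma ex_is_cert_le:
  assumes "x \<in> subtree t u" "l x < length u"
  shows "\<exists>y. is_cert t l u y \<and> y \<le> x"
proof -
  let ?S = "{y \<in> subtree t u. l y < length u}"
  have fin: "finite ?S" using finite_subtree by simp
  have "Min ?S \<in> ?S" using fin assms by (intro Min_in) auto
  moreover have "no_cert_before t l u (Min ?S)"
    unfolding no_cert_before_def
  proof (intro ballI impI)
    fix y assume y: "y \<in> subtree t u" "y < Min ?S"
    show "length u \<le> l y"
    proof (rule ccontr)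
      assume "\<not> length u \<le> l y"
      then have "Min ?S \<le> y" using fin y(1) by (intro Min_le) auto
      then show False using y(2) by simp
    qed
  qed
  moreover have "Min ?S \<le> x" using fin assms by (intro Min_le) auto
  ultimately show ?thesis by (auto simp: is_cert_def)
qed

lemma sticky_iff:
  "sticky t l \<longleftrightarrow>
     (\<forall>u\<in>nodes t. l u \<le> length u) \<and>
     (\<forall>u\<in>nodes t. u \<noteq> [] \<longrightarrow> (\<exists>v\<in>subtree t u. l v < length u)) \<and>
     (\<forall>u\<in>nodes t. \<forall>v\<in>subtree t u. l v = length u \<longrightarrow> no_cert_before t l u v)"
  by (auto simp: sticky_def depth_def precedes_iff_less no_cert_before_def)

lemma certificate_eqI:
  assumes "is_cert t l u x"
  shows "certificate t l u = x"
  unfolding certificate_def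
proof (rule the_equality)
  show "x \<in> subtree t u \<and> l x < depth u \<and> (\<forall>w\<in>subtree t u. precedes w x \<longrightarrow> \<not> l w < depth u)"
    using assms by (auto simp: is_cert_def no_cert_before_def depth_def precedes_iff_less)
  fix y assume "y \<in> subtree t u \<and> l y < depth u \<and> (\<forall>w\<in>subtree t u. precedes w y \<longrightarrow> \<not> l w < depth u)"
  then have "is_cert t l u y"
    by (auto simp: is_cert_def no_cert_before_def depth_def precedes_iff_less not_less)
  then show "y = x" using assms by (rule is_cert_unique)
qed

lemma sticky_ex_is_cert:
  assumes "sticky t l" "u \<in> nodes t" "u \<noteq> []"
  shows "\<exists>x. is_cert t l u x"
proof -
  obtain v where "v \<in> subtree t u" "l v < length u" using assms by (auto simp: sticky_iff)
  then show ?thesis using ex_is_cert_le by blast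
qed

definition certified :: "ptree \<Rightarrow> (nat list \<Rightarrow> nat) \<Rightarrow> nat list \<Rightarrow> nat list set" where
  "certified t l x = {u. is_cert t l u x}"

lemma certifiedD:
  assumes "u \<in> certified t l x"
  shows "u \<in> nodes t" "u \<noteq> []" "prefix u x" "x \<in> nodes t" "l x < length u"
  using assms nodes_prefix_closed
  by (auto simp: certified_def is_cert_def mem_subtree_iff)

lemma finite_certified: "finite (certified t l x)"
  by (rule finite_subset[OF _ finite_nodes]) (auto dest: certifiedD)

lemma card_UN_certified:
  "finite S \<Longrightarrow> card (\<Union>x\<in>S. certified t l x) = (\<Sum>x\<in>S. card (certified t l x))"
  by (rule card_UN_disjoint) (auto simp: finite_certified, auto simp: certified_def dest: is_cert_unique)

lemma cert_count_eq_card_certified: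
  assumes "sticky t l"
  shows "cert_count t l x = card (certified t l x)"
proof -
  have "{u \<in> nodes t. u \<noteq> [] \<and> certificate t l u = x} = certified t l x"
  proof (intro set_eqI iffI)
    fix u assume "u \<in> {u \<in> nodes t. u \<noteq> [] \<and> certificate t l u = x}"
    then show "u \<in> certified t l x"
      using sticky_ex_is_cert[OF assms] certificate_eqI by (fastforce simp: certified_def)
  next
    fix u assume "u \<in> certified t l x"
    then show "u \<in> {u \<in> nodes t. u \<noteq> [] \<and> certificate t l u = x}"
      using certifiedD certificate_eqI by (auto simp: certified_def)
  qed
  then show ?thesis by (simp add: cert_count_def)
qed

subsection \<open>Open depths and admissible labels\<close>

text \<open>The depths of those ancestors of w that are still waiting for their certificate when
  the prefix-order traversal reaches w.\<close>

definition open_depths :: "ptree \<Rightarrow> (nat list \<Rightarrow> nat) \<Rightarrow> nat list \<Rightarrow> nat set" where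
  "open_depths t l w = {d. 1 \<le> d \<and> d \<le> length w \<and> no_cert_before t l (take d w) w}"

lemma finite_open_depths: "finite (open_depths t l w)"
  by (rule finite_subset[of _ "{..length w}"]) (auto simp: open_depths_def)

lemma zero_notin_open_depths: "0 \<notin> open_depths t l w"
  by (simp add: open_depths_def)

lemma inj_on_take_open_depths: "inj_on (\<lambda>d. take d w) (open_depths t l w)"
  by (rule inj_onI) (metis (no_types, lifting) length_take min_absorb2 mem_Collect_eq open_depths_def)

lemma open_depths_cong:
  assumes "\<And>y. y \<in> nodes t \<Longrightarrow> y < w \<Longrightarrow> l y = l' y"
  shows "open_depths t l w = open_depths t l' w"
proof -
  have "l x = l' x" if "x \<in> subtree t u" "x < w" for u x
    using assms[OF subsetD[OF subtree_subset_nodes that(1)] that(2)] .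
  then have "no_cert_before t l u w = no_cert_before t l' u w" for u
    unfolding no_cert_before_def by auto
  then show ?thesis by (simp add: open_depths_def)
qed

lemma certified_eq_take_open_depths:
  assumes "w \<in> nodes t"
  shows "certified t l w = (\<lambda>d. take d w) ` {d \<in> open_depths t l w. l w < d}"
proof (intro set_eqI iffI)
  fix u assume "u \<in> certified t l w"
  then have "u = take (length u) w" "length u \<in> {d \<in> open_depths t l w. l w < d}"
    using certifiedD[of u t l w] prefix_length_le
    by (auto simp: certified_def is_cert_def open_depths_def prefix_def Suc_le_eq)
  then show "u \<in> (\<lambda>d. take d w) ` {d \<in> open_depths t l w. l w < d}" by blast
next
  fix u assume "u \<in> (\<lambda>d. take d w) ` {d \<in> open_depths t l w. l w < d}"
  then obtain d where "u = take d w" "d \<in> open_depths t l w" "l w < d" by blast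
  then show "u \<in> certified t l w"
    using assms take_is_prefix[of d w]
    by (auto simp: certified_def is_cert_def open_depths_def mem_subtree_iff min_def)
qed

lemma card_certified:
  assumes "w \<in> nodes t"
  shows "card (certified t l w) = card {d \<in> open_depths t l w. l w < d}"
  unfolding certified_eq_take_open_depths[OF assms]
  by (rule card_image, rule inj_on_subset[OF inj_on_take_open_depths]) blast

text \<open>The local condition that a labeling built along the prefix order has to satisfy at w:
  the label is a legal sticky label there, and w certifies exactly c w nodes.\<close>

definition admissible_at ::
  "ptree \<Rightarrow> (nat list \<Rightarrow> nat) \<Rightarrow> (nat list \<Rightarrow> nat) \<Rightarrow> nat list \<Rightarrow> bool" where
  "admissible_at t c l w \<longleftrightarrow> l w \<le> length w \<and>
     (w \<noteq> [] \<longrightarrow> card {d \<in> open_depths t l w. l w < d} = c w) \<and>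
     (l w = 0 \<or> l w \<in> open_depths t l w)"

lemma admissible_at_cong:
  assumes "\<And>y. y \<in> nodes t \<Longrightarrow> y < w \<Longrightarrow> l y = l' y" "l w = l' w"
  shows "admissible_at t c l w = admissible_at t c l' w"
  using open_depths_cong[OF assms(1)] assms(2) by (simp add: admissible_at_def)

lemma admissible_at_card_certified:
  assumes "admissible_at t c l w" "w \<in> nodes t" "w \<noteq> []"
  shows "card (certified t l w) = c w"
  using assms card_certified by (simp add: admissible_at_def)

lemma sticky_admissible_at:
  assumes "sticky t l" "w \<in> nodes t"
  shows "admissible_at t (\<lambda>x. card (certified t l x)) l w"
proof -
  have le: "l w \<le> length w" using assms by (simp add: sticky_iff)
  have "l w \<in> open_depths t l w" if "l w \<noteq> 0"
  proof -
    let ?u = "take (l w) w"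
    have "?u \<in> nodes t" using nodes_prefix_closed[OF take_is_prefix assms(2)] .
    moreover have "w \<in> subtree t ?u" "l w = length ?u"
      using assms(2) le take_is_prefix by (auto simp: mem_subtree_iff)
    ultimately have "no_cert_before t l ?u w" using assms(1) by (simp add: sticky_iff)
    then show ?thesis using that le by (simp add: open_depths_def)
  qed
  then show ?thesis using le card_certified[OF assms(2)] by (auto simp: admissible_at_def)
qed

lemma admissible_at_unique:
  assumes "admissible_at t c l w" "admissible_at t c' l' w" "w \<noteq> [] \<Longrightarrow> c w = c' w"
    "\<And>y. y \<in> nodes t \<Longrightarrow> y < w \<Longrightarrow> l y = l' y"
  shows "l w = l' w"
proof (cases "w = []")
  case True
  then show ?thesis using assms(1,2) by (simp add: admissible_at_def)
next
  case False
  have D: "open_depths t l' w = open_depths t l w" using open_depths_cong[OF assms(4)] by simp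
  have v: "l w = 0 \<or> l w \<in> open_depths t l w" "l' w = 0 \<or> l' w \<in> open_depths t l w"
    using assms(1,2) D by (simp_all add: admissible_at_def)
  have "card {d \<in> open_depths t l w. l w < d} = card {d \<in> open_depths t l w. l' w < d}"
    using assms(1,2,3) D False by (simp add: admissible_at_def)
  then show ?thesis using threshold_card_greater_unique[OF finite_open_depths v] by blast
qed

lemma ex_admissible_at_update:
  assumes "w \<noteq> [] \<Longrightarrow> c w \<le> card (open_depths t l w)"
  shows "\<exists>v. admissible_at t c (l(w := v)) w"
proof -
  have same: "open_depths t (l(w := v)) w = open_depths t l w" for v
    by (rule open_depths_cong) auto
  obtain v where "(v = 0 \<or> v \<in> open_depths t l w) \<and>
      (w \<noteq> [] \<longrightarrow> card {d \<in> open_depths t l w. v < d} = c w)"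
  proof (cases "w = []")
    case False
    then show ?thesis
      using that ex_threshold_card_greater[OF finite_open_depths zero_notin_open_depths assms]
      by blast
  qed (use that in blast)
  moreover have "v \<le> length w" if "v \<in> open_depths t l w" using that by (simp add: open_depths_def)
  ultimately show ?thesis by (intro exI[of _ v]) (auto simp: admissible_at_def same)
qed

subsection \<open>Sums of flows\<close>

definition prefix_minimal :: "nat list set \<Rightarrow> nat list set" where
  "prefix_minimal M = {y \<in> M. \<forall>z\<in>M. \<not> strict_prefix z y}"

lemma UN_subtree_prefix_minimal:
  assumes "M \<subseteq> nodes t" "\<And>x y. x \<in> M \<Longrightarrow> y \<in> nodes t \<Longrightarrow> prefix x y \<Longrightarrow> y \<in> M"
  shows "(\<Union>y\<in>prefix_minimal M. subtree t y) = M"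
proof (intro equalityI subsetI)
  fix x assume "x \<in> M"
  then obtain y where y: "y \<in> M" "prefix y x"
    and shortest: "\<And>z. z \<in> M \<Longrightarrow> prefix z x \<Longrightarrow> length y \<le> length z"
    using ex_has_least_nat[of "\<lambda>z. z \<in> M \<and> prefix z x" x length] by auto
  have "\<not> strict_prefix z y" if "z \<in> M" for z
  proof
    assume "strict_prefix z y"
    then have "prefix z x" "length z < length y"
      using y(2) prefix_length_less prefix_order.less_imp_le prefix_order.trans by blast+
    then show False using shortest[OF that] by simp
  qed
  then have "y \<in> prefix_minimal M" using y(1) by (simp add: prefix_minimal_def)
  moreover have "x \<in> subtree t y" using \<open>x \<in> M\<close> y(2) assms(1) by (auto simp: mem_subtree_iff)
  ultimately show "x \<in> (\<Union>y\<in>prefix_minimal M. subtree t y)" by blast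
next
  fix x assume "x \<in> (\<Union>y\<in>prefix_minimal M. subtree t y)"
  then show "x \<in> M" using assms(2) by (auto simp: prefix_minimal_def mem_subtree_iff)
qed

lemma subtree_disjoint_prefix_minimal:
  assumes "y \<in> prefix_minimal M" "y' \<in> prefix_minimal M" "y \<noteq> y'"
  shows "subtree t y \<inter> subtree t y' = {}"
  using assms prefix_same_cases[of y _ y']
  by (fastforce simp: prefix_minimal_def mem_subtree_iff strict_prefix_def)

lemma sum_upward_closed:
  assumes "M \<subseteq> nodes t" "\<And>x y. x \<in> M \<Longrightarrow> y \<in> nodes t \<Longrightarrow> prefix x y \<Longrightarrow> y \<in> M"
  shows "sum f M = (\<Sum>y\<in>prefix_minimal M. out_rate t f y)"
proof -
  have "finite (prefix_minimal M)"
    using assms(1) finite_nodes by (auto simp: prefix_minimal_def intro: finite_subset)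
  then have "(\<Sum>y\<in>prefix_minimal M. out_rate t f y) = sum f (\<Union>y\<in>prefix_minimal M. subtree t y)"
    unfolding out_rate_def
    by (intro sum.UNION_disjoint[symmetric]) (auto simp: finite_subtree subtree_disjoint_prefix_minimal)
  then show ?thesis using UN_subtree_prefix_minimal[OF assms] by simp
qed

lemma closed_flow_sum_zero:
  assumes "f \<in> closed_flows t"
  shows "sum f (forest_nodes t) = 0"
proof -
  have "out_rate t f y = 0" if y: "y \<in> prefix_minimal (forest_nodes t)" for y
  proof -
    from y obtain i r where yir: "y = i # r" and "y \<in> nodes t"
      by (auto simp: prefix_minimal_def mem_forest_nodes_iff neq_Nil_conv)
    then have "[i] \<in> forest_nodes t"
      using nodes_prefix_closed[of "[i]" y t] by (simp add: mem_forest_nodes_iff prefix_def)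
    then have "\<not> strict_prefix [i] y" using y by (simp add: prefix_minimal_def)
    then have "y = [i]" using yir by (auto simp: strict_prefix_def prefix_def)
    then show ?thesis using assms \<open>[i] \<in> forest_nodes t\<close> by (simp add: closed_flows_def)
  qed
  moreover have "y \<in> forest_nodes t"
    if "x \<in> forest_nodes t" "y \<in> nodes t" "prefix x y" for x y
    using that by (auto simp: mem_forest_nodes_iff prefix_def)
  then have "sum f (forest_nodes t) = (\<Sum>y\<in>prefix_minimal (forest_nodes t). out_rate t f y)"
    by (intro sum_upward_closed) (auto simp: forest_nodes_def)
  ultimately show ?thesis by simp
qed

lemma flow_sum_after_nonneg:
  assumes "is_flow t f"
  shows "0 \<le> sum f {x \<in> nodes t. w < x}"
proof -
  have "0 \<le> out_rate t f y" if "y \<in> prefix_minimal {x \<in> nodes t. w < x}" for y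
    using that assms by (auto simp: prefix_minimal_def is_flow_def mem_forest_nodes_iff)
  moreover have "w < y" if "w < x" "prefix x y" for x y
    using that prefix_imp_le by (blast intro: order.strict_trans2)
  ultimately show ?thesis by (subst sum_upward_closed[of _ t]) (auto intro: sum_nonneg)
qed

lemma sum_flow_succ:
  assumes "is_flow t f" "S \<subseteq> forest_nodes t"
  shows "int (\<Sum>x\<in>S. nat (f x + 1)) = sum f S + int (card S)"
proof -
  have "int (nat (f x + 1)) = f x + 1" if "x \<in> S" for x
    using assms that by (force simp: is_flow_def)
  then have "int (\<Sum>x\<in>S. nat (f x + 1)) = (\<Sum>x\<in>S. f x + 1)"
    unfolding of_nat_sum by (rule sum.cong[OF refl])
  then show ?thesis by (simp add: sum.distrib)
qed

lemma closed_flow_sum_upto_le: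
  assumes "f \<in> closed_flows t"
  shows "(\<Sum>x\<in>{x \<in> forest_nodes t. x \<le> w}. nat (f x + 1)) \<le> card {x \<in> forest_nodes t. x \<le> w}"
proof -
  let ?A = "{x \<in> forest_nodes t. x \<le> w}" and ?B = "{x \<in> nodes t. w < x}"
  have flow: "is_flow t f" using assms by (simp add: closed_flows_def)
  have "finite ?A" using finite_nodes by (simp add: forest_nodes_def)
  then have "sum f ?A + sum f ?B = sum f (?A \<union> ?B)"
    using finite_nodes by (intro sum.union_disjoint[symmetric]) auto
  also have "?A \<union> ?B = forest_nodes t" by (auto simp: mem_forest_nodes_iff)
  finally have "sum f ?A + sum f ?B = 0" using closed_flow_sum_zero[OF assms] by simp
  then have "sum f ?A \<le> 0" using flow_sum_after_nonneg[OF flow, of w] by linarith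
  then have "int (\<Sum>x\<in>?A. nat (f x + 1)) \<le> int (card ?A)"
    using sum_flow_succ[OF flow, of ?A] by fastforce
  then show ?thesis by (simp only: of_nat_le_iff)
qed

lemma card_subtree_le_flow:
  assumes "is_flow t f" "u \<in> forest_nodes t"
  shows "card (subtree t u) \<le> (\<Sum>x\<in>subtree t u. nat (f x + 1))"
proof -
  have "0 \<le> sum f (subtree t u)" using assms by (simp add: is_flow_def out_rate_def)
  then have "int (card (subtree t u)) \<le> int (\<Sum>x\<in>subtree t u. nat (f x + 1))"
    using sum_flow_succ[OF assms(1) subtree_subset_forest_nodes[OF assms(2)]] by linarith
  then show ?thesis by (simp only: of_nat_le_iff)
qed

subsection \<open>The bijection\<close>

lemma subtree_subset_UN_certified:
  assumes "sticky t l" "v \<in> forest_nodes t"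
  shows "subtree t v \<subseteq> (\<Union>x\<in>subtree t v. certified t l x)"
proof
  fix u assume "u \<in> subtree t v"
  then have u: "u \<in> nodes t" "prefix v u" by (simp_all add: mem_subtree_iff)
  moreover have "u \<noteq> []" using u(2) assms(2) by (auto simp: mem_forest_nodes_iff prefix_def)
  ultimately obtain x where x: "is_cert t l u x" using sticky_ex_is_cert[OF assms(1)] by blast
  then have "x \<in> nodes t" "prefix v x"
    using prefix_order.trans[OF u(2)] by (auto simp: is_cert_def mem_subtree_iff)
  then have "x \<in> subtree t v" by (simp add: mem_subtree_iff)
  moreover have "u \<in> certified t l x" using x by (simp add: certified_def)
  ultimately show "u \<in> (\<Union>x\<in>subtree t v. certified t l x)" by blast
qed

lemma UN_certified_subset_subtree_child:
  "(\<Union>x\<in>subtree t [i]. certified t l x) \<subseteq> subtree t [i]"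
proof
  fix u assume "u \<in> (\<Union>x\<in>subtree t [i]. certified t l x)"
  then obtain x where x: "prefix [i] x" "u \<in> certified t l x" by (auto simp: mem_subtree_iff)
  note u = certifiedD[OF x(2)]
  have "prefix [i] u \<or> prefix u [i]" using prefix_same_cases[OF x(1) u(3)] .
  then have "prefix [i] u" using u(2) by (auto simp: prefix_def Cons_eq_append_conv)
  then show "u \<in> subtree t [i]" using u(1) by (simp add: mem_subtree_iff)
qed

lemma out_rate_flow_of_labeling:
  assumes "sticky t l" "v \<in> forest_nodes t"
  shows "out_rate t (flow_of_labeling t l) v =
    int (card (\<Union>x\<in>subtree t v. certified t l x)) - int (card (subtree t v))"
proof -
  have "out_rate t (flow_of_labeling t l) v = (\<Sum>x\<in>subtree t v. int (card (certified t l x)) - 1)"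
    unfolding out_rate_def
  proof (rule sum.cong[OF refl])
    fix x assume "x \<in> subtree t v"
    then have "x \<in> forest_nodes t" using subtree_subset_forest_nodes[OF assms(2)] by blast
    then show "flow_of_labeling t l x = int (card (certified t l x)) - 1"
      by (simp add: flow_of_labeling_def cert_count_eq_card_certified[OF assms(1)])
  qed
  also have "\<dots> = int (\<Sum>x\<in>subtree t v. card (certified t l x)) - int (card (subtree t v))"
    by (simp add: sum_subtractf of_nat_sum)
  finally show ?thesis by (simp add: card_UN_certified finite_subtree)
qed

lemma flow_of_labeling_closed:
  assumes "l \<in> sticky_labelings t"
  shows "flow_of_labeling t l \<in> closed_flows t"
proof -
  have st: "sticky t l" using assms by (simp add: sticky_labelings_def)
  have fin: "finite (\<Union>x\<in>subtree t v. certified t l x)" for v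
    by (simp add: finite_subtree finite_certified)
  have rate: "card (subtree t v) \<le> card (\<Union>x\<in>subtree t v. certified t l x)"
    if "v \<in> forest_nodes t" for v
    using card_mono[OF fin subtree_subset_UN_certified[OF st that]] .
  have "is_flow t (flow_of_labeling t l)"
    unfolding is_flow_def
  proof (intro ballI conjI)
    fix v assume v: "v \<in> forest_nodes t"
    show "-1 \<le> flow_of_labeling t l v" using v by (simp add: flow_of_labeling_def)
    show "0 \<le> out_rate t (flow_of_labeling t l) v"
      using rate[OF v] out_rate_flow_of_labeling[OF st v] by simp
  qed
  moreover have "out_rate t (flow_of_labeling t l) [i] = 0" if "[i] \<in> forest_nodes t" for i
    using rate[OF that] card_mono[OF finite_subtree UN_certified_subset_subtree_child[of t l i]]
      out_rate_flow_of_labeling[OF st that]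
    by simp
  ultimately show ?thesis by (simp add: closed_flows_def flow_of_labeling_def)
qed

lemma flow_of_labeling_inj: "inj_on (flow_of_labeling t) (sticky_labelings t)"
proof (rule inj_onI)
  fix l l' assume l: "l \<in> sticky_labelings t" and l': "l' \<in> sticky_labelings t"
    and eq: "flow_of_labeling t l = flow_of_labeling t l'"
  have st: "sticky t l" "sticky t l'" using l l' by (simp_all add: sticky_labelings_def)
  have "l w = l' w" if "w \<in> nodes t" for w
    using finite_nodes that
  proof (induction w rule: finite_less_induct)
    case (less w)
    have "card (certified t l w) = card (certified t l' w)" if "w \<noteq> []"
      using fun_cong[OF eq, of w] less.hyps that
      by (simp add: flow_of_labeling_def cert_count_eq_card_certified st mem_forest_nodes_iff)
    then show ?case
      using admissible_at_unique[OF sticky_admissible_at[OF st(1) less.hyps]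
          sticky_admissible_at[OF st(2) less.hyps]] less.IH
      by blast
  qed
  then show "l = l'" using l l' by (intro extensionalityI) (auto simp: sticky_labelings_def)
qed

lemma mem_UN_certified_before:
  assumes "y \<in> subtree t x" "y < w" "l y < length x"
  shows "x \<in> (\<Union>z\<in>{z \<in> forest_nodes t. z < w}. certified t l z)"
proof -
  obtain z where z: "is_cert t l x z" "z \<le> y" using ex_is_cert_le[where l = l, OF assms(1,3)] by blast
  then have xz: "x \<in> certified t l z" by (simp add: certified_def)
  moreover have "z \<in> forest_nodes t"
    using certifiedD[OF xz] by (auto simp: mem_forest_nodes_iff prefix_def)
  moreover have "z < w" using z(2) assms(2) by simp
  ultimately show ?thesis by blast
qed

lemma ex_label_less_in_subtree:
  assumes "u \<in> nodes t" "\<And>x. x \<in> subtree t u \<Longrightarrow> card (certified t l x) = c x"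
    "card (subtree t u) \<le> (\<Sum>x\<in>subtree t u. c x)"
  shows "\<exists>x\<in>subtree t u. l x < length u"
proof (rule ccontr)
  assume "\<not> ?thesis"
  then have big: "length u \<le> l x" if "x \<in> subtree t u" for x using that by (simp add: not_less)
  have "(\<Union>x\<in>subtree t u. certified t l x) \<subseteq> subtree t u - {u}"
  proof
    fix v assume "v \<in> (\<Union>x\<in>subtree t u. certified t l x)"
    then obtain x where x: "x \<in> subtree t u" "v \<in> certified t l x" by blast
    note v = certifiedD[OF x(2)]
    have "prefix u v \<or> prefix v u"
      using prefix_same_cases[OF _ v(3)] x(1) by (simp add: mem_subtree_iff)
    moreover have "\<not> prefix v u" using prefix_length_le big[OF x(1)] v(5) by fastforce
    ultimately show "v \<in> subtree t u - {u}" using v(1) by (auto simp: mem_subtree_iff)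
  qed
  moreover have "u \<in> subtree t u" using assms(1) by (simp add: mem_subtree_iff)
  ultimately have "card (\<Union>x\<in>subtree t u. certified t l x) < card (subtree t u)"
    using card_mono[OF finite_Diff[OF finite_subtree]] card_Diff1_less[OF finite_subtree]
    by (meson order.strict_trans1)
  moreover have "card (\<Union>x\<in>subtree t u. certified t l x) = (\<Sum>x\<in>subtree t u. c x)"
    using card_UN_certified[OF finite_subtree] assms(2) by simp
  ultimately show False using assms(3) by simp
qed

lemma UN_certified_before_Un_open_subset:
  assumes "w \<in> nodes t"
  shows "(\<Union>z\<in>{z \<in> forest_nodes t. z < w}. certified t l z) \<union> (\<lambda>d. take d w) ` open_depths t l w
    \<subseteq> {x \<in> forest_nodes t. x \<le> w}"
proof (intro subsetI, elim UnE)
  fix x assume "x \<in> (\<Union>z\<in>{z \<in> forest_nodes t. z < w}. certified t l z)"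
  then obtain z where "z < w" and xz: "x \<in> certified t l z" by blast
  then have "x \<le> w" using prefix_imp_le[OF certifiedD(3)[OF xz]] by simp
  then show "x \<in> {x \<in> forest_nodes t. x \<le> w}"
    using certifiedD(1,2)[OF xz] by (simp add: mem_forest_nodes_iff)
next
  fix x assume "x \<in> (\<lambda>d. take d w) ` open_depths t l w"
  then obtain d where "d \<in> open_depths t l w" "x = take d w" by blast
  moreover have "take d w \<in> nodes t" "take d w \<le> w"
    using nodes_prefix_closed[OF take_is_prefix assms] prefix_imp_le[OF take_is_prefix] by blast+
  ultimately show "x \<in> {x \<in> forest_nodes t. x \<le> w}"
    by (auto simp: open_depths_def mem_forest_nodes_iff)
qed

lemma forest_upto_subset_UN_certified_before_Un_open:
  assumes flow: "is_flow t f"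
    and counts: "\<And>x. x \<in> forest_nodes t \<Longrightarrow> x < w \<Longrightarrow> card (certified t l x) = nat (f x + 1)"
  shows "{x \<in> forest_nodes t. x \<le> w} \<subseteq>
    (\<Union>z\<in>{z \<in> forest_nodes t. z < w}. certified t l z) \<union> (\<lambda>d. take d w) ` open_depths t l w"
    (is "?A \<subseteq> ?U \<union> ?T")
proof
  fix x assume "x \<in> ?A"
  then have xf: "x \<in> forest_nodes t" and "x \<le> w" by simp_all
  then have xn: "x \<in> nodes t" and "x \<noteq> []" by (simp_all add: mem_forest_nodes_iff)
  show "x \<in> ?U \<union> ?T"
  proof (cases "prefix x w")
    case True
    then have tx: "take (length x) w = x" by (auto elim: prefixE)
    show ?thesis
    proof (cases "no_cert_before t l x w")
      case True
      have "length x \<in> open_depths t l w"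
        using True tx \<open>x \<noteq> []\<close> prefix_length_le[OF \<open>prefix x w\<close>]
        by (simp add: open_depths_def Suc_le_eq)
      then have "x \<in> ?T" using image_eqI[of x "\<lambda>d. take d w" "length x"] tx by simp
      then show ?thesis ..
    next
      case False
      then obtain y where "y \<in> subtree t x" "y < w" "l y < length x"
        by (auto simp: no_cert_before_def not_le)
      then have "x \<in> ?U" by (rule mem_UN_certified_before)
      then show ?thesis ..
    qed
  next
    case False
    then have "x \<noteq> w" using prefix_order.refl by blast
    then have "x < w" using \<open>x \<le> w\<close> by (rule order.not_eq_order_implies_strict)
    have before: "y < w" if "y \<in> subtree t x" for y
    proof -
      from that have "prefix x y" by (simp add: mem_subtree_iff)
      then obtain v where "y = x @ v" by (rule prefixE)
      then show ?thesis using append_less_if_not_prefix[OF \<open>x < w\<close> False] by simp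
    qed
    have "card (certified t l y) = nat (f y + 1)" if "y \<in> subtree t x" for y
      using counts[OF subsetD[OF subtree_subset_forest_nodes[OF xf] that] before[OF that]] .
    from ex_label_less_in_subtree[OF xn this card_subtree_le_flow[OF flow xf]]
    obtain y where "y \<in> subtree t x" "l y < length x" ..
    then show ?thesis using mem_UN_certified_before[OF _ before] by blast
  qed
qed

lemma UN_certified_before_disjoint_open_depths:
  "(\<Union>z\<in>{z \<in> forest_nodes t. z < w}. certified t l z) \<inter> (\<lambda>d. take d w) ` open_depths t l w = {}"
proof -
  have False if "z < w" "u \<in> certified t l z" "no_cert_before t l u w" for z u
    using that by (auto simp: certified_def is_cert_def no_cert_before_def)
  then show ?thesis by (auto simp: open_depths_def)
qed

lemma card_open_depths_ge:
  assumes closed: "f \<in> closed_flows t" and w: "w \<in> forest_nodes t"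
    and counts: "\<And>x. x \<in> forest_nodes t \<Longrightarrow> x < w \<Longrightarrow> card (certified t l x) = nat (f x + 1)"
  shows "nat (f w + 1) \<le> card (open_depths t l w)"
proof -
  let ?c = "\<lambda>x. nat (f x + 1)"
  let ?A = "{x \<in> forest_nodes t. x < w}" and ?A' = "{x \<in> forest_nodes t. x \<le> w}"
  have flow: "is_flow t f" using closed by (simp add: closed_flows_def)
  have finA: "finite ?A" using finite_nodes by (simp add: forest_nodes_def)
  have "w \<in> nodes t" using w by (simp add: mem_forest_nodes_iff)
  have "?A' = (\<Union>z\<in>?A. certified t l z) \<union> (\<lambda>d. take d w) ` open_depths t l w"
    using forest_upto_subset_UN_certified_before_Un_open[OF flow counts]
      UN_certified_before_Un_open_subset[OF \<open>w \<in> nodes t\<close>]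
    by (rule subset_antisym)
  then have "card ?A' = card ((\<Union>z\<in>?A. certified t l z) \<union> (\<lambda>d. take d w) ` open_depths t l w)"
    by (rule arg_cong)
  also have "\<dots> = card (\<Union>z\<in>?A. certified t l z) + card ((\<lambda>d. take d w) ` open_depths t l w)"
    by (intro card_Un_disjoint)
      (simp_all add: finA finite_certified finite_open_depths UN_certified_before_disjoint_open_depths)
  also have "card (\<Union>z\<in>?A. certified t l z) = (\<Sum>x\<in>?A. ?c x)"
    using card_UN_certified[OF finA] counts by simp
  also have "card ((\<lambda>d. take d w) ` open_depths t l w) = card (open_depths t l w)"
    using card_image[OF inj_on_take_open_depths] .
  finally have "card ?A' = (\<Sum>x\<in>?A. ?c x) + card (open_depths t l w)" .
  moreover have "?A' = insert w ?A" using w by auto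
  then have "(\<Sum>x\<in>?A'. ?c x) = ?c w + (\<Sum>x\<in>?A. ?c x)" using finA by simp
  moreover have "(\<Sum>x\<in>?A'. ?c x) \<le> card ?A'" by (rule closed_flow_sum_upto_le[OF closed])
  ultimately show ?thesis by linarith
qed

lemma ex_admissible_labeling:
  assumes "f \<in> closed_flows t"
  shows "\<exists>l. \<forall>x\<in>nodes t. admissible_at t (\<lambda>x. nat (f x + 1)) l x"
proof -
  let ?c = "\<lambda>x. nat (f x + 1)"
  have "\<exists>l. \<forall>x\<in>S. admissible_at t ?c l x"
    if "finite S" "S \<subseteq> nodes t" "\<And>x y. x \<in> S \<Longrightarrow> y \<in> nodes t \<Longrightarrow> y < x \<Longrightarrow> y \<in> S" for S
    using that
  proof (induction S rule: finite_linorder_max_induct)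
    case empty
    then show ?case by simp
  next
    case (insert w S)
    have down: "y \<in> S" if "x \<in> insert w S" "y \<in> nodes t" "y < x" "y \<noteq> w" for x y
      using insert.prems(2)[OF that(1-3)] that(4) by blast
    have "y \<in> S" if "x \<in> S" "y \<in> nodes t" "y < x" for x y
    proof (rule down)
      show "y \<noteq> w" using insert.hyps(2) that(1,3) by (metis less_trans less_irrefl)
    qed (use that in simp_all)
    moreover have "S \<subseteq> nodes t" using insert.prems(1) by simp
    ultimately obtain l where l: "\<forall>x\<in>S. admissible_at t ?c l x"
      using insert.IH by blast
    have "?c w \<le> card (open_depths t l w)" if "w \<noteq> []"
    proof (rule card_open_depths_ge[OF assms])
      show "w \<in> forest_nodes t" using insert.prems(1) that by (simp add: mem_forest_nodes_iff)
      fix x assume x: "x \<in> forest_nodes t" "x < w"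
      then have "x \<in> S" using down[of w x] by (simp add: mem_forest_nodes_iff)
      then have "admissible_at t ?c l x" using l by blast
      then show "card (certified t l x) = ?c x"
        using admissible_at_card_certified x by (simp add: mem_forest_nodes_iff)
    qed
    then obtain v where v: "admissible_at t ?c (l(w := v)) w"
      using ex_admissible_at_update[where c = ?c] by blast
    have "admissible_at t ?c (l(w := v)) x" if "x \<in> S" for x
    proof -
      have "x < w" using insert.hyps(2) that by blast
      then have "admissible_at t ?c (l(w := v)) x = admissible_at t ?c l x"
        by (intro admissible_at_cong) auto
      then show ?thesis using l that by simp
    qed
    then show ?case using v by auto
  qed
  from this[OF finite_nodes] show ?thesis by blast
qed

lemma sticky_if_admissible:
  assumes "is_flow t f" "\<And>x. x \<in> nodes t \<Longrightarrow> admissible_at t (\<lambda>x. nat (f x + 1)) l x"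
  shows "sticky t l"
  unfolding sticky_iff
proof (intro conjI ballI impI)
  fix u assume "u \<in> nodes t"
  then show "l u \<le> length u" using assms(2) by (simp add: admissible_at_def)
next
  fix u assume u: "u \<in> nodes t" "u \<noteq> []"
  then have uf: "u \<in> forest_nodes t" by (simp add: mem_forest_nodes_iff)
  have "card (certified t l x) = nat (f x + 1)" if "x \<in> subtree t u" for x
  proof -
    have "x \<in> forest_nodes t" using subtree_subset_forest_nodes[OF uf] that by blast
    then show ?thesis
      using admissible_at_card_certified[OF assms(2)] by (simp add: mem_forest_nodes_iff)
  qed
  then show "\<exists>v\<in>subtree t u. l v < length u"
    using ex_label_less_in_subtree[OF u(1) _ card_subtree_le_flow[OF assms(1) uf]] by blast
next
  fix u v assume u: "u \<in> nodes t" and v: "v \<in> subtree t u" "l v = length u"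
  show "no_cert_before t l u v"
  proof (cases "u = []")
    case True
    then show ?thesis by (simp add: no_cert_before_def)
  next
    case False
    have "admissible_at t (\<lambda>x. nat (f x + 1)) l v"
      using assms(2) v(1) by (simp add: mem_subtree_iff)
    then have "l v \<in> open_depths t l v" using v(2) False by (simp add: admissible_at_def)
    moreover have "take (l v) v = u" using v by (auto simp: mem_subtree_iff prefix_def)
    ultimately show ?thesis by (simp add: open_depths_def)
  qed
qed

lemma flow_of_labeling_surj:
  assumes "f \<in> closed_flows t"
  shows "f \<in> flow_of_labeling t ` sticky_labelings t"
proof -
  let ?c = "\<lambda>x. nat (f x + 1)"
  obtain l where l: "\<forall>x\<in>nodes t. admissible_at t ?c l x"
    using ex_admissible_labeling[OF assms] by blast
  let ?l = "restrict l (nodes t)"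
  have adm: "admissible_at t ?c ?l x" if "x \<in> nodes t" for x
    using l that admissible_at_cong[of t x ?l l] by simp
  have flow: "is_flow t f" using assms by (simp add: closed_flows_def)
  have st: "sticky t ?l" using sticky_if_admissible[OF flow adm] .
  have "flow_of_labeling t ?l x = f x" for x
  proof (cases "x \<in> forest_nodes t")
    case True
    then have "cert_count t ?l x = nat (f x + 1)"
      using cert_count_eq_card_certified[OF st] admissible_at_card_certified[OF adm]
      by (simp add: mem_forest_nodes_iff)
    moreover have "-1 \<le> f x" using True flow by (simp add: is_flow_def)
    ultimately show ?thesis using True by (simp add: flow_of_labeling_def)
  next
    case False
    then show ?thesis using assms by (simp add: flow_of_labeling_def closed_flows_def extensional_def)
  qed
  moreover have "?l \<in> sticky_labelings t" using st by (simp add: sticky_labelings_def)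
  ultimately show ?thesis by (metis ext image_eqI)
qed

theorem mainTheorem6:
  fixes T :: ptree
  assumes "num_edges T \<ge> 1"
  shows "bij_betw (flow_of_labeling T) (sticky_labelings T) (closed_flows T)"
  unfolding bij_betw_def
  using flow_of_labeling_inj flow_of_labeling_closed flow_of_labeling_surj by blast

end
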